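(* Let $H=\Bbbk^G\#\Bbbk F$ be as in the context with $G$ abelian. Fix $f\in F$ and let $V=\Bbbk v$ be a simple (one-dimensional) right $\Bbbk^{G_f}$-comodule with $\rho(v)=v\otimes\sum_{g\in G_f}a^gp_g$, $a^g\in\Bbbk$. Let $\tilde V=(V\otimes\Bbbk f)\Box_{H'_f}H$ be the induced right $H$-comodule. Then $\mathrm{cf}(\tilde V)$ is the simple subcoalgebra of $H$ spanned by $B=\{\sum_{g\in G_f}a^gp_{(z')^{-1}gz}\#(z^{-1}\triangleright f)\mid z,z'\in T_f\}$, and $\chi(\tilde V)=\sum_{z\in T_f}\sum_{g\in G_f}a^gp_g\#(z^{-1}\triangleright f)$.
   Context: Setting: $\Bbbk$ algebraically closed of characteristic $0$, $F$ a group (possibly infinite), $G$ a finite abelian group, $(F,G,\triangleleft,\triangleright)$ a matched pair ($\triangleright:G\times F\to F$ a left action of $G$ on the set $F$, $\triangleleft:G\times F\to G$ a right action of $F$ on the set $G$, with $g\triangleright(ff')=(g\triangleright f)((g\triangleleft f)\triangleright f')$ and $(gg')\triangleleft f=(g\triangleleft(g'\triangleright f))(g'\triangleleft f)$). $H=\Bbbk^G\#\Bbbk F$ is the Hopf algebra with basis $\{p_g\#f\}_{g\in G,f\in F}$ ($\{p_g\}$ the dual basis of $\Bbbk^G$), product $(p_g\#f)(p_{g'}\#f')=\delta_{g\triangleleft f,g'}p_g\#ff'$, unit $\sum_gp_g\#1_F$, coproduct $\Delta(p_g\#f)=\sum_{x\in G}p_{gx^{-1}}\#(x\triangleright f)\otimes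 p_x\#f$, counit $\varepsilon(p_g\#f)=\delta_{g,1_G}$, antipode $S(p_g\#f)=p_{(g\triangleleft f)^{-1}}\#(g\triangleright f)^{-1}$. $G_f=\{g\in G\mid g\triangleright f=f\}$; $T_f$ a complete set of right coset representatives of $G_f$ in $G$ containing $1_G$. $\Bbbk^{G_f}$ is the usual dual group coalgebra. $H'_f$ is the coalgebra with basis $\{p_g\#f'\mid g\in G_f,f'\in F\}$, $\Delta(p_g\#f')=\sum_{x\in G_f}p_{gx^{-1}}\#(x\triangleright f')\otimes p_x\#f'$, $\varepsilon(p_g\#f')=\delta_{g,1_G}$; $H$ is a left $H'_f$-comodule via $(\pi_f\otimes\mathrm{id})\Delta$ ($\pi_f$ kills $p_g\#f'$, $g\notin G_f$). For a right $\Bbbk^{G_f}$-comodule $V$ with $\rho(v)=\sum_{g\in G_f}v_g\otimes p_g$, $V\otimes\Bbbk f$ is a right $H'_f$-comodule via $v\otimes f\mapsto\sum_gv_g\otimes f\otimes p_g\#f$, and $\tilde V=(V\otimes\Bbbk f)\Box_{H'_f}H$ (cotensor product) is a right $H$-comodule via $\mathrm{id}\otimes\Delta$. $\mathrm{cf}(M)$ is the smallest subcoalgebra $D$ with $\rho(M)\subseteq M\otimes D$; $\chi(M)=\sum_i(m_i^*\otimes\mathrm{id})\rho(m_i)$. *)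

theory Defs
  imports "HOL-Algebra.Algebra" "HOL-Computational_Algebra.Polynomial" "HOL-Library.Function_Algebras"
begin

definition sc :: "'k::field \<Rightarrow> ('i \<Rightarrow> 'k) \<Rightarrow> ('i \<Rightarrow> 'k)" where
  "sc c h = (\<lambda>x. c * h x)"

definition kspan :: "('i \<Rightarrow> 'k::field) set \<Rightarrow> ('i \<Rightarrow> 'k) set" where
  "kspan S = module.span sc S"

definition ksubspace :: "('i \<Rightarrow> 'k::field) set \<Rightarrow> bool" where
  "ksubspace S = module.subspace sc S"

definition kindep :: "('i \<Rightarrow> 'k::field) set \<Rightarrow> bool" where
  "kindep S = (\<not> module.dependent sc S)"

definition fin_basis :: "('i \<Rightarrow> 'k::field) set \<Rightarrow> ('i \<Rightarrow> 'k) set \<Rightarrow> bool" where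
  "fin_basis Bs W = (finite Bs \<and> Bs \<subseteq> W \<and> kindep Bs \<and> kspan Bs = W)"

definition pb :: "'i \<Rightarrow> 'i \<Rightarrow> 'k::field" where
  "pb i = (\<lambda>j. if j = i then 1 else 0)"

definition tp :: "('i \<Rightarrow> 'k::field) \<Rightarrow> ('j \<Rightarrow> 'k) \<Rightarrow> ('i \<times> 'j \<Rightarrow> 'k)" where
  "tp u w = (\<lambda>(a, b). u a * w b)"

definition tensor_sub :: "('i \<Rightarrow> 'k::field) set \<Rightarrow> ('j \<Rightarrow> 'k) set \<Rightarrow> ('i \<times> 'j \<Rightarrow> 'k) set" where
  "tensor_sub U D = kspan {tp u d | u d. u \<in> U \<and> d \<in> D}"

definition algebraically_closed :: "'k::field itself \<Rightarrow> bool" where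
  "algebraically_closed TYPE('k) =
     (\<forall>p :: 'k poly. degree p > 0 \<longrightarrow> (\<exists>x. poly p x = 0))"

text \<open>rhd g f = g |> f  (left action of G on the set F);
      lhd g f = g <| f  (right action of F on the set G).\<close>
definition matched_pair ::
  "('f, 'm) monoid_scheme \<Rightarrow> ('g, 'n) monoid_scheme \<Rightarrow>
   ('g \<Rightarrow> 'f \<Rightarrow> 'g) \<Rightarrow> ('g \<Rightarrow> 'f \<Rightarrow> 'f) \<Rightarrow> bool" where
  "matched_pair F G lhd rhd =
    ((\<forall>g\<in>carrier G. \<forall>f\<in>carrier F. rhd g f \<in> carrier F \<and> lhd g f \<in> carrier G)
   \<and> (\<forall>f\<in>carrier F. rhd \<one>\<^bsub>G\<^esub> f = f)
   \<and> (\<forall>g\<in>carrier G. \<forall>g'\<in>carrier G. \<forall>f\<in>carrier F.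
         rhd (g \<otimes>\<^bsub>G\<^esub> g') f = rhd g (rhd g' f))
   \<and> (\<forall>g\<in>carrier G. lhd g \<one>\<^bsub>F\<^esub> = g)
   \<and> (\<forall>g\<in>carrier G. \<forall>f\<in>carrier F. \<forall>f'\<in>carrier F.
         lhd g (f \<otimes>\<^bsub>F\<^esub> f') = lhd (lhd g f) f')
   \<and> (\<forall>g\<in>carrier G. \<forall>f\<in>carrier F. \<forall>f'\<in>carrier F.
         rhd g (f \<otimes>\<^bsub>F\<^esub> f') = rhd g f \<otimes>\<^bsub>F\<^esub> rhd (lhd g f) f')
   \<and> (\<forall>g\<in>carrier G. \<forall>g'\<in>carrier G. \<forall>f\<in>carrier F.
         lhd (g \<otimes>\<^bsub>G\<^esub> g') f = lhd g (rhd g' f) \<otimes>\<^bsub>G\<^esub> lhd g' f))"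

text \<open>Elements of H are written in the basis  p_g # f  (indexed by (g,f)):
  an element is a finitely supported coefficient function on  G x F.
  H (x) H has basis indexed by ((g1,f1),(g2,f2)).\<close>

definition Hspace :: "('f, 'm) monoid_scheme \<Rightarrow> ('g, 'n) monoid_scheme \<Rightarrow> ('g \<times> 'f \<Rightarrow> 'k::field) set" where
  "Hspace F G = {h. finite {p. h p \<noteq> 0} \<and>
                    (\<forall>p. h p \<noteq> 0 \<longrightarrow> fst p \<in> carrier G \<and> snd p \<in> carrier F)}"

definition pf :: "'g \<Rightarrow> 'f \<Rightarrow> ('g \<times> 'f \<Rightarrow> 'k::field)" where
  "pf g f = pb (g, f)"

definition Delta_basis ::
  "('g, 'n) monoid_scheme \<Rightarrow> ('g \<Rightarrow> 'f \<Rightarrow> 'f) \<Rightarrow> 'g \<Rightarrow> 'f \<Rightarrow> (('g \<times> 'f) \<times> ('g \<times> 'f) \<Rightarrow> 'k::field)" where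
  "Delta_basis G rhd g f =
     (\<Sum>x\<in>carrier G. tp (pf (g \<otimes>\<^bsub>G\<^esub> inv\<^bsub>G\<^esub> x) (rhd x f)) (pf x f))"

definition Delta ::
  "('g, 'n) monoid_scheme \<Rightarrow> ('g \<Rightarrow> 'f \<Rightarrow> 'f) \<Rightarrow> ('g \<times> 'f \<Rightarrow> 'k::field) \<Rightarrow> (('g \<times> 'f) \<times> ('g \<times> 'f) \<Rightarrow> 'k)" where
  "Delta G rhd h = (\<Sum>p\<in>{p. h p \<noteq> 0}. sc (h p) (Delta_basis G rhd (fst p) (snd p)))"

definition subcoalgebra ::
  "('f, 'm) monoid_scheme \<Rightarrow> ('g, 'n) monoid_scheme \<Rightarrow> ('g \<Rightarrow> 'f \<Rightarrow> 'f) \<Rightarrow>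
   ('g \<times> 'f \<Rightarrow> 'k::field) set \<Rightarrow> bool" where
  "subcoalgebra F G rhd D =
     (D \<subseteq> Hspace F G \<and> ksubspace D \<and> Delta G rhd ` D \<subseteq> tensor_sub D D)"

definition simple_subcoalgebra ::
  "('f, 'm) monoid_scheme \<Rightarrow> ('g, 'n) monoid_scheme \<Rightarrow> ('g \<Rightarrow> 'f \<Rightarrow> 'f) \<Rightarrow>
   ('g \<times> 'f \<Rightarrow> 'k::field) set \<Rightarrow> bool" where
  "simple_subcoalgebra F G rhd D =
     (subcoalgebra F G rhd D \<and> D \<noteq> {0} \<and>
      (\<forall>D'. subcoalgebra F G rhd D' \<and> D' \<subseteq> D \<longrightarrow> D' = {0} \<or> D' = D))"

text \<open>Coefficient coalgebra: for a right H-comodule M realised as a subspace of H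
  with coaction Delta (a right coideal), cf(M) is the smallest subcoalgebra D with
  Delta(M) \<subseteq> M (x) D.  "is_cf M D" says D is this smallest subcoalgebra.\<close>
definition is_cf ::
  "('f, 'm) monoid_scheme \<Rightarrow> ('g, 'n) monoid_scheme \<Rightarrow> ('g \<Rightarrow> 'f \<Rightarrow> 'f) \<Rightarrow>
   ('g \<times> 'f \<Rightarrow> 'k::field) set \<Rightarrow> ('g \<times> 'f \<Rightarrow> 'k) set \<Rightarrow> bool" where
  "is_cf F G rhd M D =
     (subcoalgebra F G rhd D \<and> Delta G rhd ` M \<subseteq> tensor_sub M D \<and>
      (\<forall>D'. subcoalgebra F G rhd D' \<and> Delta G rhd ` M \<subseteq> tensor_sub M D' \<longrightarrow> D \<subseteq> D'))"

text \<open>Character chi(M) = sum_i (m_i^* (x) id) rho(m_i) for a basis m_i with dual basis m_i^*: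
  writing rho(m_b) = sum_{b'} m_{b'} (x) c_{b' b}, one has (m_b^* (x) id) rho(m_b) = c_{b b}.\<close>
definition character ::
  "('g, 'n) monoid_scheme \<Rightarrow> ('g \<Rightarrow> 'f \<Rightarrow> 'f) \<Rightarrow>
   ('g \<times> 'f \<Rightarrow> 'k::field) set \<Rightarrow> ('g \<times> 'f \<Rightarrow> 'k)" where
  "character G rhd M =
     (SOME x. \<exists>Bs c. fin_basis Bs M \<and>
        (\<forall>b\<in>Bs. Delta G rhd b = (\<Sum>b'\<in>Bs. tp b' (c b' b))) \<and>
        x = (\<Sum>b\<in>Bs. c b b))"

definition stab :: "('g, 'n) monoid_scheme \<Rightarrow> ('g \<Rightarrow> 'f \<Rightarrow> 'f) \<Rightarrow> 'f \<Rightarrow> 'g set" where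
  "stab G rhd f = {g \<in> carrier G. rhd g f = f}"

text \<open>Elements of k^{G_f}: coefficient functions on G supported on G_f (basis p_g, g in G_f).
  Comultiplication Delta(p_g) = sum_{x in G_f} p_{g x^-1} (x) p_x, counit eps(p_g) = delta_{g,1}.\<close>
definition dual_delta :: "('g, 'n) monoid_scheme \<Rightarrow> 'g set \<Rightarrow> ('g \<Rightarrow> 'k::field) \<Rightarrow> ('g \<times> 'g \<Rightarrow> 'k)" where
  "dual_delta G K c =
     (\<Sum>g\<in>K. sc (c g) (\<Sum>x\<in>K. tp (pb (g \<otimes>\<^bsub>G\<^esub> inv\<^bsub>G\<^esub> x)) (pb x)))"

definition dual_eps :: "('g, 'n) monoid_scheme \<Rightarrow> 'g set \<Rightarrow> ('g \<Rightarrow> 'k::field) \<Rightarrow> 'k" where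
  "dual_eps G K c = (\<Sum>g\<in>K. c g * (if g = \<one>\<^bsub>G\<^esub> then 1 else 0))"

text \<open>V = k v with rho(v) = v (x) c, c = sum_{g in G_f} a^g p_g, is a right k^{G_f}-comodule
  iff coassociativity  v (x) c (x) c = v (x) Delta(c)  and counitality  eps(c) v = v hold.\<close>
definition onedim_comodule :: "('g, 'n) monoid_scheme \<Rightarrow> 'g set \<Rightarrow> ('g \<Rightarrow> 'k::field) \<Rightarrow> bool" where
  "onedim_comodule G K a =
     (let c = (\<lambda>g. if g \<in> K then a g else 0)
      in dual_delta G K c = tp c c \<and> dual_eps G K c = 1)"

text \<open>Left H'_f-coaction on H: (pi_f (x) id) Delta, pi_f killing p_g # f' for g not in G_f.\<close>
definition left_coact ::
  "('g, 'n) monoid_scheme \<Rightarrow> ('g \<Rightarrow> 'f \<Rightarrow> 'f) \<Rightarrow> 'f \<Rightarrow> ('g \<times> 'f \<Rightarrow> 'k::field) \<Rightarrow> (('g \<times> 'f) \<times> ('g \<times> 'f) \<Rightarrow> 'k)" where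
  "left_coact G rhd f h =
     (\<lambda>(p, q). if fst p \<in> stab G rhd f then Delta G rhd h (p, q) else 0)"

text \<open>Since V (x) kf = k (v (x) f) is one-dimensional,
  (V (x) kf) (x) H is identified with H via (v (x) f) (x) h |-> h.  The right H'_f-coaction on
  V (x) kf is v (x) f |-> sum_{g in G_f} a^g (v (x) f) (x) (p_g # f), so the cotensor condition
  becomes  (sum_g a^g p_g # f) (x) h = (pi_f (x) id) Delta(h), and the right H-coaction id (x) Delta
  becomes Delta restricted to this subspace.\<close>
definition induced_comodule ::
  "('f, 'm) monoid_scheme \<Rightarrow> ('g, 'n) monoid_scheme \<Rightarrow> ('g \<Rightarrow> 'f \<Rightarrow> 'f) \<Rightarrow> 'f \<Rightarrow> ('g \<Rightarrow> 'k::field) \<Rightarrow>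
   ('g \<times> 'f \<Rightarrow> 'k) set" where
  "induced_comodule F G rhd f a =
     {h \<in> Hspace F G.
        tp (\<Sum>g\<in>stab G rhd f. sc (a g) (pf g f)) h = left_coact G rhd f h}"

end

theory Submission
  imports Defs
begin

(* The elements mcoeff z z' (z, z' in T) of B are dual to the points mpoint z z' = (z'^-1 z, z^-1 |> f)
   of G x F, and the coproduct acts on them as on the dual of a matrix algebra:
   Delta (mcoeff z z') = sum_w mcoeff w z' (x) mcoeff z w.  The induced comodule has the basis
   mcoeff z 1 (z in T), so its matrix coefficients are exactly the mcoeff z w.  Hence cf is the span
   of B; it is simple because slicing Delta twice extracts every mcoeff u w from any nonzero element;
   and chi is the trace sum_z mcoeff z z, which does not depend on the basis used to define it. *)

section \<open>Coordinate spaces and tensors\<close>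

interpretation ksc: Modules.module "sc :: 'k::field \<Rightarrow> ('i \<Rightarrow> 'k) \<Rightarrow> ('i \<Rightarrow> 'k)"
  by unfold_locales (auto simp: sc_def fun_eq_iff algebra_simps)

lemma kspan_eq: "kspan S = ksc.span S"
  by (simp add: kspan_def)

lemma ksubspace_eq: "ksubspace S = ksc.subspace S"
  by (simp add: ksubspace_def)

lemma sum_apply: "(\<Sum>i\<in>A. h i) x = (\<Sum>i\<in>A. h i x)"
  by (induction A rule: infinite_finite_induct) auto

lemma sc_apply [simp]: "sc c h x = c * h x"
  by (simp add: sc_def)

lemma tp_apply [simp]: "tp u w (p, q) = u p * w q"
  by (simp add: tp_def)

lemma pf_apply: "pf g y p = (if p = (g, y) then 1 else 0)"
  by (simp add: pf_def pb_def)

lemma module_hom_scI: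
  assumes "\<And>x y. L (x + y) = L x + L y" and "\<And>c x. L (sc c x) = sc c (L x)"
  shows "module_hom sc sc L"
  unfolding module_hom_iff using assms by (blast intro: ksc.module_axioms)

lemma module_hom_slice_snd: "module_hom sc sc (\<lambda>Y q. Y (p, q))"
  by (rule module_hom_scI) (simp_all add: fun_eq_iff)

lemma module_hom_slice_fst: "module_hom sc sc (\<lambda>Y p. Y (p, q))"
  by (rule module_hom_scI) (simp_all add: fun_eq_iff)

lemma tensor_sub_tp: "u \<in> A \<Longrightarrow> d \<in> D \<Longrightarrow> tp u d \<in> tensor_sub A D"
  unfolding tensor_sub_def kspan_eq by (rule ksc.span_base) auto

lemma tensor_sub_sum: "(\<And>a. a \<in> A \<Longrightarrow> Y a \<in> tensor_sub U V) \<Longrightarrow> (\<Sum>a\<in>A. Y a) \<in> tensor_sub U V"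
  unfolding tensor_sub_def kspan_eq by (rule ksc.span_sum)

lemma ksubspace_tensor_sub: "ksubspace (tensor_sub A D)"
  by (simp add: tensor_sub_def ksubspace_eq kspan_eq)

lemma kspan_linear_image:
  assumes L: "module_hom sc sc L" and W: "ksubspace W"
    and S: "\<And>s. s \<in> S \<Longrightarrow> L s \<in> W" and x: "x \<in> kspan S"
  shows "L x \<in> W"
proof -
  have "ksc.subspace (L -` W)"
    using module_hom.subspace_vimage[OF L] W by (simp add: ksubspace_eq)
  then have "ksc.span S \<subseteq> L -` W"
    using S by (intro ksc.span_minimal) auto
  then show ?thesis using x by (auto simp: kspan_eq)
qed

lemma tensor_sub_linear_image:
  assumes L: "module_hom sc sc L" and S: "ksubspace S"
    and tp: "\<And>u d. u \<in> A \<Longrightarrow> d \<in> D \<Longrightarrow> L (tp u d) \<in> S"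
    and Y: "Y \<in> tensor_sub A D"
  shows "L Y \<in> S"
proof (rule kspan_linear_image[OF L S])
  show "Y \<in> kspan {tp u d |u d. u \<in> A \<and> d \<in> D}" using Y by (simp add: tensor_sub_def)
qed (use tp in blast)

lemma tensor_sub_slice_snd: "Y \<in> tensor_sub A D \<Longrightarrow> ksubspace D \<Longrightarrow> (\<lambda>q. Y (p, q)) \<in> D"
proof (rule tensor_sub_linear_image[OF module_hom_slice_snd])
  fix u d assume "d \<in> D" "ksubspace D"
  moreover have "(\<lambda>q. tp u d (p, q)) = sc (u p) d" by (simp add: fun_eq_iff)
  ultimately show "(\<lambda>q. tp u d (p, q)) \<in> D" by (simp add: ksubspace_eq ksc.subspace_scale)
qed

lemma tensor_sub_slice_fst: "Y \<in> tensor_sub A D \<Longrightarrow> ksubspace A \<Longrightarrow> (\<lambda>p. Y (p, q)) \<in> A"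
proof (rule tensor_sub_linear_image[OF module_hom_slice_fst])
  fix u d assume "u \<in> A" "ksubspace A"
  moreover have "(\<lambda>p. tp u d (p, q)) = sc (d q) u" by (simp add: fun_eq_iff mult.commute)
  ultimately show "(\<lambda>p. tp u d (p, q)) \<in> A" by (simp add: ksubspace_eq ksc.subspace_scale)
qed

lemma module_hom_sc_eq_on_kspan:
  fixes L L' :: "('i \<Rightarrow> 'k::field) \<Rightarrow> ('j \<Rightarrow> 'k)"
  assumes L: "module_hom sc sc L" and L': "module_hom sc sc L'"
    and S: "\<And>s. s \<in> S \<Longrightarrow> L s = L' s" and x: "x \<in> kspan S"
  shows "L x = L' x"
proof -
  have hom: "module_hom sc sc (\<lambda>x. L x - L' x)"
    by (rule module_hom_scI)
       (simp_all add: module_hom.add[OF L] module_hom.add[OF L'] module_hom.scale[OF L]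
         module_hom.scale[OF L'] ksc.scale_right_diff_distrib)
  have zero: "ksubspace {0 :: 'j \<Rightarrow> 'k}" by (simp add: ksubspace_eq)
  have "L x - L' x \<in> {0}"
    by (rule kspan_linear_image[OF hom zero _ x]) (simp add: S)
  then show ?thesis by simp
qed

lemma fin_basis_coeff_unique:
  assumes "fin_basis Bs M" and "(\<Sum>b\<in>Bs. sc (\<alpha> b) b) = (\<Sum>b\<in>Bs. sc (\<beta> b) b)" and "b \<in> Bs"
  shows "\<alpha> b = \<beta> b"
proof -
  have "(\<Sum>b\<in>Bs. sc (\<alpha> b - \<beta> b) b) = 0"
    using assms(2) by (simp add: ksc.scale_left_diff_distrib sum_subtractf)
  moreover have "finite Bs" "\<not> ksc.dependent Bs"
    using assms(1) by (simp_all add: fin_basis_def kindep_def)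
  ultimately have "\<alpha> b - \<beta> b = 0"
    using ksc.independentD[of Bs Bs "\<lambda>b. \<alpha> b - \<beta> b"] assms(3) by simp
  then show ?thesis by simp
qed

section \<open>Biorthogonal systems and traces\<close>

definition biorthogonal :: "('a \<Rightarrow> 'i \<Rightarrow> 'k::field) \<Rightarrow> ('a \<Rightarrow> 'i) \<Rightarrow> 'a set \<Rightarrow> bool" where
  "biorthogonal v P I \<longleftrightarrow> finite I \<and> (\<forall>a\<in>I. \<forall>b\<in>I. v a (P b) = (if a = b then 1 else 0))"

lemma biorthogonalD:
  "biorthogonal v P I \<Longrightarrow> a \<in> I \<Longrightarrow> b \<in> I \<Longrightarrow> v a (P b) = (if a = b then 1 else 0)"
  by (simp add: biorthogonal_def)

lemma biorthogonal_finite: "biorthogonal v P I \<Longrightarrow> finite I"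
  by (simp add: biorthogonal_def)

lemma biorthogonal_sum_delta:
  assumes "biorthogonal v P I" "b \<in> I"
  shows "(\<Sum>a\<in>I. v a (P b) * c a) = c b"
proof -
  have "(\<Sum>a\<in>I. v a (P b) * c a) = (\<Sum>a\<in>I. if a = b then c a else 0)"
    using assms by (intro sum.cong) (auto simp: biorthogonalD)
  then show ?thesis using assms by (simp add: biorthogonal_finite)
qed

lemma biorthogonal_eval_sum:
  assumes "biorthogonal v P I" "b \<in> I"
  shows "(\<Sum>a\<in>I. sc (c a) (v a)) (P b) = c b"
  using biorthogonal_sum_delta[OF assms] by (simp add: sum_apply mult.commute)

lemma biorthogonal_slice_sum:
  assumes "biorthogonal v P I" "b \<in> I"
  shows "(\<lambda>q. (\<Sum>a\<in>I. tp (v a) (w a)) (P b, q)) = w b"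
  using biorthogonal_sum_delta[OF assms] by (simp add: fun_eq_iff sum_apply)

lemma biorthogonal_expansion:
  assumes bo: "biorthogonal v P I" and x: "x \<in> kspan (v ` I)"
  shows "x = (\<Sum>a\<in>I. sc (x (P a)) (v a))"
proof (rule module_hom_sc_eq_on_kspan[OF _ _ _ x])
  show "module_hom sc sc (\<lambda>x. x)" by (rule ksc.module_hom_ident)
  show "module_hom sc sc (\<lambda>x. \<Sum>a\<in>I. sc (x (P a)) (v a))"
    by (rule module_hom_scI) (simp_all add: fun_eq_iff sum_apply algebra_simps sum.distrib sum_distrib_left)
  fix s assume "s \<in> v ` I"
  then obtain b where "b \<in> I" "s = v b" by blast
  moreover have "(\<Sum>a\<in>I. sc (v b (P a)) (v a)) = (\<Sum>a\<in>I. if a = b then v a else 0)"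
    using \<open>b \<in> I\<close> bo by (intro sum.cong) (auto simp: biorthogonalD fun_eq_iff)
  ultimately show "s = (\<Sum>a\<in>I. sc (s (P a)) (v a))"
    using bo by (simp add: biorthogonal_finite)
qed

lemma biorthogonal_inj_on: "biorthogonal v P I \<Longrightarrow> inj_on v I"
  by (rule inj_onI) (metis biorthogonalD one_neq_zero)

lemma biorthogonal_fin_basis:
  assumes bo: "biorthogonal v P I"
  shows "fin_basis (v ` I) (kspan (v ` I))"
proof -
  have "\<not> ksc.dependent (v ` I)"
  proof
    assume "ksc.dependent (v ` I)"
    then obtain u b where "(\<Sum>a\<in>I. sc (u (v a)) (v a)) = 0" "b \<in> I" "u (v b) \<noteq> 0"
      using ksc.dependent_finite[of "v ` I"] biorthogonal_finite[OF bo]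
      by (auto simp: sum.reindex[OF biorthogonal_inj_on[OF bo]])
    then show False
      using biorthogonal_eval_sum[OF bo, of b "\<lambda>a. u (v a)"] by simp
  qed
  then show ?thesis
    using biorthogonal_finite[OF bo] by (auto simp: fin_basis_def kindep_def kspan_eq ksc.span_superset)
qed

lemma biorthogonal_basis_change:
  assumes bo: "biorthogonal v P I" and Bs: "fin_basis Bs (kspan (v ` I))"
    and Q: "\<And>i. i \<in> I \<Longrightarrow> v i = (\<Sum>b\<in>Bs. sc (Q i b) b)"
    and b: "b \<in> Bs" and b': "b' \<in> Bs"
  shows "(\<Sum>i\<in>I. b' (P i) * Q i b) = (if b = b' then 1 else 0)"
proof -
  have fin: "finite Bs" and "b' \<in> kspan (v ` I)"
    using Bs b' by (auto simp: fin_basis_def)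
  have "(\<Sum>b\<in>Bs. sc (if b = b' then 1 else 0) b) = b'"
  proof -
    have "(\<Sum>b\<in>Bs. sc (if b = b' then 1 else 0) b) = (\<Sum>b\<in>Bs. if b = b' then b else 0)"
      by (rule sum.cong) (simp_all add: fun_eq_iff)
    then show ?thesis using fin b' by simp
  qed
  also have "\<dots> = (\<Sum>i\<in>I. sc (b' (P i)) (v i))"
    by (rule biorthogonal_expansion[OF bo \<open>b' \<in> kspan (v ` I)\<close>])
  also have "\<dots> = (\<Sum>i\<in>I. \<Sum>b\<in>Bs. sc (b' (P i) * Q i b) b)"
    by (intro sum.cong refl) (simp add: Q fun_eq_iff sum_apply sum_distrib_left mult.assoc)
  also have "\<dots> = (\<Sum>b\<in>Bs. \<Sum>i\<in>I. sc (b' (P i) * Q i b) b)"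
    by (rule sum.swap)
  also have "\<dots> = (\<Sum>b\<in>Bs. sc (\<Sum>i\<in>I. b' (P i) * Q i b) b)"
    by (simp add: fun_eq_iff sum_apply sum_distrib_right)
  finally show ?thesis
    by (rule fin_basis_coeff_unique[OF Bs _ b, symmetric])
qed

text \<open>The right-hand side is the trace in the basis \<open>v\<close>, whose dual basis is evaluation at the
  points \<open>P i\<close>.\<close>

lemma trace_eq_biorthogonal_trace:
  assumes \<Delta>: "module_hom sc sc \<Delta>" and bo: "biorthogonal v P I"
    and Bs: "fin_basis Bs (kspan (v ` I))"
    and c: "\<And>b. b \<in> Bs \<Longrightarrow> \<Delta> b = (\<Sum>b'\<in>Bs. tp b' (c b' b))"
  shows "(\<Sum>b\<in>Bs. c b b) = (\<Sum>i\<in>I. (\<lambda>q. \<Delta> (v i) (P i, q)))"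
proof -
  have fin: "finite Bs" and span: "kspan Bs = kspan (v ` I)"
    using Bs by (simp_all add: fin_basis_def)
  have "v i \<in> range (\<lambda>u. \<Sum>b\<in>Bs. sc (u b) b)" if "i \<in> I" for i
    using ksc.span_finite[OF fin] span ksc.span_superset[of "v ` I"] that by (auto simp: kspan_eq)
  then have "\<forall>i\<in>I. \<exists>u. v i = (\<Sum>b\<in>Bs. sc (u b) b)"
    by blast
  then obtain Q where Q: "\<And>i. i \<in> I \<Longrightarrow> v i = (\<Sum>b\<in>Bs. sc (Q i b) b)"
    by metis
  have "(\<Sum>i\<in>I. \<Delta> (v i) (P i, q)) = (\<Sum>b\<in>Bs. c b b q)" for q
  proof -
    have "(\<Sum>i\<in>I. \<Delta> (v i) (P i, q)) = (\<Sum>i\<in>I. \<Sum>b\<in>Bs. \<Sum>b'\<in>Bs. b' (P i) * Q i b * c b' b q)"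
    proof (rule sum.cong[OF refl])
      fix i assume i: "i \<in> I"
      have "\<Delta> (v i) = (\<Sum>b\<in>Bs. sc (Q i b) (\<Sum>b'\<in>Bs. tp b' (c b' b)))"
        unfolding Q[OF i] module_hom.sum[OF \<Delta>] module_hom.scale[OF \<Delta>]
        by (intro sum.cong refl) (simp add: c)
      then show "\<Delta> (v i) (P i, q) = (\<Sum>b\<in>Bs. \<Sum>b'\<in>Bs. b' (P i) * Q i b * c b' b q)"
        by (simp add: sum_apply sum_distrib_left mult_ac)
    qed
    also have "\<dots> = (\<Sum>b\<in>Bs. \<Sum>i\<in>I. \<Sum>b'\<in>Bs. b' (P i) * Q i b * c b' b q)"
      by (rule sum.swap)
    also have "\<dots> = (\<Sum>b\<in>Bs. \<Sum>b'\<in>Bs. \<Sum>i\<in>I. b' (P i) * Q i b * c b' b q)"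
      by (intro sum.cong refl) (rule sum.swap)
    also have "\<dots> = (\<Sum>b\<in>Bs. \<Sum>b'\<in>Bs. (if b = b' then 1 else 0) * c b' b q)"
      by (intro sum.cong refl) (simp only: sum_distrib_right[symmetric] biorthogonal_basis_change[OF bo Bs Q])
    also have "\<dots> = (\<Sum>b\<in>Bs. c b b q)"
      using fin by (intro sum.cong refl) (simp add: if_distrib[of "\<lambda>x. x * _"] cong: if_cong)
    finally show ?thesis .
  qed
  then show ?thesis by (simp add: fun_eq_iff sum_apply)
qed

lemma trace_eq_biorthogonal_diag:
  assumes \<Delta>: "module_hom sc sc \<Delta>" and bo: "biorthogonal v P I"
    and c: "\<And>i. i \<in> I \<Longrightarrow> \<Delta> (v i) = (\<Sum>j\<in>I. tp (v j) (c i j))"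
    and Bs: "fin_basis Bs (kspan (v ` I))"
    and c': "\<And>b. b \<in> Bs \<Longrightarrow> \<Delta> b = (\<Sum>b'\<in>Bs. tp b' (c' b' b))"
  shows "(\<Sum>b\<in>Bs. c' b b) = (\<Sum>i\<in>I. c i i)"
proof -
  have "(\<Sum>b\<in>Bs. c' b b) = (\<Sum>i\<in>I. (\<lambda>q. \<Delta> (v i) (P i, q)))"
    by (rule trace_eq_biorthogonal_trace[OF \<Delta> bo Bs c'])
  also have "\<dots> = (\<Sum>i\<in>I. c i i)"
    by (rule sum.cong[OF refl]) (simp add: c biorthogonal_slice_sum[OF bo])
  finally show ?thesis .
qed

lemma character_eqI:
  assumes \<Delta>: "module_hom sc sc \<Delta>" and agree: "\<And>x. x \<in> M \<Longrightarrow> Delta G rhd x = \<Delta> x"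
    and bo: "biorthogonal v P I" and M: "M = kspan (v ` I)"
    and c: "\<And>i. i \<in> I \<Longrightarrow> \<Delta> (v i) = (\<Sum>j\<in>I. tp (v j) (c i j))"
  shows "character G rhd M = (\<Sum>i\<in>I. c i i)"
  unfolding character_def
proof (rule someI2_ex[where Q = "\<lambda>y. y = (\<Sum>i\<in>I. c i i)"])
  let ?inv = "the_inv_into I v"
  have inj: "inj_on v I" by (rule biorthogonal_inj_on[OF bo])
  have "Delta G rhd (v i) = (\<Sum>b'\<in>v ` I. tp b' (c i (?inv b')))" if "i \<in> I" for i
    using that by (simp add: agree M kspan_eq ksc.span_base c sum.reindex[OF inj] the_inv_into_f_f[OF inj])
  then have "\<forall>b\<in>v ` I. Delta G rhd b = (\<Sum>b'\<in>v ` I. tp b' (c (?inv b) (?inv b')))"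
    by (auto simp: the_inv_into_f_f[OF inj])
  moreover have "fin_basis (v ` I) M"
    using biorthogonal_fin_basis[OF bo] M by simp
  ultimately show "\<exists>x Bs c'. fin_basis Bs M \<and> (\<forall>b\<in>Bs. Delta G rhd b = (\<Sum>b'\<in>Bs. tp b' (c' b' b))) \<and>
      x = (\<Sum>b\<in>Bs. c' b b)"
    by (intro exI[of _ "\<Sum>b\<in>v ` I. c (?inv b) (?inv b)"] exI[of _ "v ` I"]
        exI[of _ "\<lambda>b' b. c (?inv b) (?inv b')"]) simp
next
  fix x assume "\<exists>Bs c'. fin_basis Bs M \<and> (\<forall>b\<in>Bs. Delta G rhd b = (\<Sum>b'\<in>Bs. tp b' (c' b' b))) \<and>
      x = (\<Sum>b\<in>Bs. c' b b)"
  then obtain Bs c' where Bs: "fin_basis Bs M" and x: "x = (\<Sum>b\<in>Bs. c' b b)"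
    and c': "\<And>b. b \<in> Bs \<Longrightarrow> Delta G rhd b = (\<Sum>b'\<in>Bs. tp b' (c' b' b))"
    by blast
  have "\<Delta> b = (\<Sum>b'\<in>Bs. tp b' (c' b' b))" if "b \<in> Bs" for b
    using c'[OF that] agree[of b] that Bs by (auto simp: fin_basis_def)
  then show "x = (\<Sum>i\<in>I. c i i)"
    using trace_eq_biorthogonal_diag[OF \<Delta> bo c Bs[unfolded M]] x by simp
qed

section \<open>Matrix coalgebras\<close>

locale matrix_coalgebra =
  fixes \<Delta> :: "('i \<Rightarrow> 'k::field) \<Rightarrow> ('i \<times> 'i \<Rightarrow> 'k)"
    and e :: "'a \<Rightarrow> 'a \<Rightarrow> 'i \<Rightarrow> 'k" and P :: "'a \<Rightarrow> 'a \<Rightarrow> 'i" and I :: "'a set"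
  assumes comult_linear: "module_hom sc sc \<Delta>"
    and biorthogonal_units: "biorthogonal (case_prod e) (case_prod P) (I \<times> I)"
    and comult_unit: "\<And>i j. i \<in> I \<Longrightarrow> j \<in> I \<Longrightarrow> \<Delta> (e i j) = (\<Sum>k\<in>I. tp (e k j) (e i k))"
begin

abbreviation coalg :: "('i \<Rightarrow> 'k) set" where
  "coalg \<equiv> kspan (case_prod e ` (I \<times> I))"

lemma finite_index: "finite I"
  using biorthogonal_finite[OF biorthogonal_units] by (auto simp: finite_cartesian_product_iff)

lemma unit_eval:
  "i \<in> I \<Longrightarrow> j \<in> I \<Longrightarrow> k \<in> I \<Longrightarrow> l \<in> I \<Longrightarrow> e i j (P k l) = (if i = k \<and> j = l then 1 else 0)"
  using biorthogonalD[OF biorthogonal_units, of "(i, j)" "(k, l)"] by auto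

lemma unit_in_coalg: "i \<in> I \<Longrightarrow> j \<in> I \<Longrightarrow> e i j \<in> coalg"
  unfolding kspan_eq by (rule ksc.span_base) auto

lemma comult_coalg: "x \<in> coalg \<Longrightarrow> \<Delta> x \<in> tensor_sub coalg coalg"
  by (rule kspan_linear_image[OF comult_linear ksubspace_tensor_sub])
     (auto simp: comult_unit intro!: tensor_sub_sum tensor_sub_tp unit_in_coalg)

lemma module_hom_comult_slice_snd: "module_hom sc sc (\<lambda>x q. \<Delta> x (p, q))"
  using module_hom_compose[OF comult_linear module_hom_slice_snd] by (simp add: comp_def)

lemma module_hom_comult_slice_fst: "module_hom sc sc (\<lambda>x p. \<Delta> x (p, q))"
  using module_hom_compose[OF comult_linear module_hom_slice_fst] by (simp add: comp_def)

lemma comult_unit_slice_snd: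
  assumes "i \<in> I" "j \<in> I" "k \<in> I" "l \<in> I"
  shows "(\<lambda>q. \<Delta> (e i j) (P k l, q)) = (if j = l then e i k else 0)"
proof -
  have "\<Delta> (e i j) (P k l, q) = (\<Sum>m\<in>I. if m = k then (if j = l then e i m q else 0) else 0)" for q
    unfolding comult_unit[OF assms(1,2)] sum_apply using assms
    by (intro sum.cong refl) (auto simp: unit_eval)
  then show ?thesis using finite_index assms by (simp add: fun_eq_iff)
qed

lemma comult_unit_slice_fst:
  assumes "i \<in> I" "j \<in> I" "k \<in> I" "l \<in> I"
  shows "(\<lambda>p. \<Delta> (e i j) (p, P k l)) = (if i = k then e l j else 0)"
proof -
  have "\<Delta> (e i j) (p, P k l) = (\<Sum>m\<in>I. if m = l then (if i = k then e m j p else 0) else 0)" for p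
    unfolding comult_unit[OF assms(1,2)] sum_apply using assms
    by (intro sum.cong refl) (auto simp: unit_eval)
  then show ?thesis using finite_index assms by (simp add: fun_eq_iff)
qed

lemma comult_double_slice:
  assumes x: "x \<in> coalg" and "i \<in> I" "j \<in> I" "u \<in> I" "w \<in> I"
  shows "(\<lambda>p. \<Delta> (\<lambda>q. \<Delta> x (P w j, q)) (p, P i u)) = sc (x (P i j)) (e u w)"
proof (rule module_hom_sc_eq_on_kspan[where L = "\<lambda>x p. \<Delta> (\<lambda>q. \<Delta> x (P w j, q)) (p, P i u)"
      and L' = "\<lambda>x. sc (x (P i j)) (e u w)", OF _ _ _ x])
  show "module_hom sc sc (\<lambda>x p. \<Delta> (\<lambda>q. \<Delta> x (P w j, q)) (p, P i u))"
    using module_hom_compose[OF module_hom_comult_slice_snd module_hom_comult_slice_fst]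
    by (simp add: comp_def)
  show "module_hom sc sc (\<lambda>x. sc (x (P i j)) (e u w))"
    by (rule module_hom_scI) (simp_all add: fun_eq_iff algebra_simps)
  fix s assume "s \<in> case_prod e ` (I \<times> I)"
  then obtain i' j' where i'j': "i' \<in> I" "j' \<in> I" "s = e i' j'" by (auto elim!: imageE)
  have snd: "(\<lambda>q. \<Delta> s (P w j, q)) = (if j' = j then e i' w else 0)"
    using i'j' assms by (simp add: comult_unit_slice_snd)
  show "(\<lambda>p. \<Delta> (\<lambda>q. \<Delta> s (P w j, q)) (p, P i u)) = sc (s (P i j)) (e u w)"
  proof (cases "j' = j")
    case True
    then show ?thesis
      unfolding snd using i'j' assms by (simp add: comult_unit_slice_fst unit_eval)
  next
    case False
    then show ?thesis
      unfolding snd using i'j' assms module_hom.zero[OF comult_linear] by (simp add: unit_eval fun_eq_iff)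
  qed
qed

theorem simple_coalg:
  assumes D: "ksubspace D" "D \<subseteq> coalg" "\<Delta> ` D \<subseteq> tensor_sub D D" and nonzero: "D \<noteq> {0}"
  shows "D = coalg"
proof -
  obtain x where x: "x \<in> D" "x \<noteq> 0"
    using nonzero ksc.subspace_0[of D] D(1) by (auto simp: ksubspace_eq)
  have "\<exists>a\<in>I \<times> I. x (case_prod P a) \<noteq> 0"
  proof (rule ccontr)
    assume "\<not> ?thesis"
    then have "(\<Sum>a\<in>I \<times> I. sc (x (case_prod P a)) (case_prod e a)) = 0"
      by (intro sum.neutral) simp
    then show False
      using biorthogonal_expansion[OF biorthogonal_units, of x] x D(2) by auto
  qed
  then obtain i j where ij: "i \<in> I" "j \<in> I" "x (P i j) \<noteq> 0"
    by auto
  have "e u w \<in> D" if "u \<in> I" "w \<in> I" for u w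
  proof -
    have "(\<lambda>q. \<Delta> x (P w j, q)) \<in> D"
      using D x by (intro tensor_sub_slice_snd) auto
    then have "(\<lambda>p. \<Delta> (\<lambda>q. \<Delta> x (P w j, q)) (p, P i u)) \<in> D"
      using D by (intro tensor_sub_slice_fst) auto
    then have "sc (x (P i j)) (e u w) \<in> D"
      using comult_double_slice[of x i j u w] x D(2) ij that by auto
    then have "sc (inverse (x (P i j))) (sc (x (P i j)) (e u w)) \<in> D"
      by (rule ksc.subspace_scale[OF D(1)[unfolded ksubspace_eq]])
    then show ?thesis using ij(3) by simp
  qed
  then have "coalg \<subseteq> D"
    using D(1) unfolding kspan_eq ksubspace_eq by (intro ksc.span_minimal) auto
  then show ?thesis using D(2) by blast
qed

lemma comodule_comult:
  assumes v: "\<And>i. i \<in> I \<Longrightarrow> \<Delta> (v i) = (\<Sum>k\<in>I. tp (v k) (e i k))"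
    and x: "x \<in> kspan (v ` I)"
  shows "\<Delta> x \<in> tensor_sub (kspan (v ` I)) coalg"
proof (rule kspan_linear_image[OF comult_linear ksubspace_tensor_sub _ x])
  fix s assume "s \<in> v ` I"
  then obtain i where "i \<in> I" "s = v i" by blast
  then show "\<Delta> s \<in> tensor_sub (kspan (v ` I)) coalg"
    by (auto simp: v kspan_eq intro!: tensor_sub_sum tensor_sub_tp unit_in_coalg ksc.span_base)
qed

lemma comodule_coefficients_minimal:
  assumes bo: "biorthogonal v Q I"
    and v: "\<And>i. i \<in> I \<Longrightarrow> \<Delta> (v i) = (\<Sum>k\<in>I. tp (v k) (e i k))"
    and D: "ksubspace D" and M: "\<And>x. x \<in> kspan (v ` I) \<Longrightarrow> \<Delta> x \<in> tensor_sub (kspan (v ` I)) D"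
  shows "coalg \<subseteq> D"
proof -
  have "e i j \<in> D" if "i \<in> I" "j \<in> I" for i j
  proof -
    have "v i \<in> kspan (v ` I)"
      using that by (simp add: kspan_eq ksc.span_base)
    then have "(\<lambda>q. \<Delta> (v i) (Q j, q)) \<in> D"
      using M D by (intro tensor_sub_slice_snd) auto
    moreover have "(\<lambda>q. \<Delta> (v i) (Q j, q)) = e i j"
      using that by (simp add: v biorthogonal_slice_sum[OF bo])
    ultimately show ?thesis by simp
  qed
  then show ?thesis
    using D unfolding kspan_eq ksubspace_eq by (intro ksc.span_minimal) auto
qed

end

section \<open>The coproduct of the bicrossed product\<close>

text \<open>The coproduct in coordinates.  Unlike \<^const>\<open>Delta\<close>, which sums over the support, it is
  linear on all coefficient functions; the two agree on \<^const>\<open>Hspace\<close>.\<close>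

definition comult ::
  "('g, 'n) monoid_scheme \<Rightarrow> ('g \<Rightarrow> 'f \<Rightarrow> 'f) \<Rightarrow> ('g \<times> 'f \<Rightarrow> 'k::field) \<Rightarrow> (('g \<times> 'f) \<times> ('g \<times> 'f) \<Rightarrow> 'k)"
  where "comult G rhd h = (\<lambda>((x1, y1), (x2, y2)).
     if x1 \<in> carrier G \<and> x2 \<in> carrier G \<and> y1 = rhd x2 y2 then h (x1 \<otimes>\<^bsub>G\<^esub> x2, y2) else 0)"

lemma comult_apply:
  "comult G rhd h ((x1, y1), (x2, y2)) =
     (if x1 \<in> carrier G \<and> x2 \<in> carrier G \<and> y1 = rhd x2 y2 then h (x1 \<otimes>\<^bsub>G\<^esub> x2, y2) else 0)"
  by (simp add: comult_def)

lemma module_hom_comult: "module_hom sc sc (comult G rhd)"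
  by (rule module_hom_scI) (auto simp: comult_def fun_eq_iff)

lemma (in group) Delta_basis_apply:
  assumes "finite (carrier G)" "g \<in> carrier G"
  shows "Delta_basis G rhd g y ((x1, y1), (x2, y2)) =
     (if x1 \<in> carrier G \<and> x2 \<in> carrier G \<and> y1 = rhd x2 y2 \<and> (g, y) = (x1 \<otimes> x2, y2) then 1 else 0)"
proof -
  have "Delta_basis G rhd g y ((x1, y1), (x2, y2)) =
     (\<Sum>x\<in>carrier G. if x = x2 then (if y = y2 \<and> x1 = g \<otimes> inv x2 \<and> y1 = rhd x2 y2 then 1 else 0) else 0)"
    unfolding Delta_basis_def sum_apply by (rule sum.cong) (auto simp: pf_apply)
  also have "\<dots> = (if x2 \<in> carrier G \<and> y = y2 \<and> x1 = g \<otimes> inv x2 \<and> y1 = rhd x2 y2 then 1 else 0)"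
    using assms(1) by simp
  also have "\<dots> = (if x1 \<in> carrier G \<and> x2 \<in> carrier G \<and> y1 = rhd x2 y2 \<and> (g, y) = (x1 \<otimes> x2, y2) then 1 else 0)"
    using assms(2) by (auto simp: m_assoc)
  finally show ?thesis .
qed

lemma (in group) Delta_eq_comult:
  assumes "finite (carrier G)" "h \<in> Hspace F G"
  shows "Delta G rhd h = comult G rhd h"
proof (rule ext, clarify)
  fix x1 y1 x2 y2
  let ?S = "{p. h p \<noteq> 0}"
  have fin: "finite ?S" and car: "\<And>p. p \<in> ?S \<Longrightarrow> fst p \<in> carrier G"
    using assms(2) by (auto simp: Hspace_def)
  have "Delta G rhd h ((x1, y1), (x2, y2)) =
      (\<Sum>p\<in>?S. if p = (x1 \<otimes> x2, y2) then
         (if x1 \<in> carrier G \<and> x2 \<in> carrier G \<and> y1 = rhd x2 y2 then h p else 0) else 0)"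
    unfolding Delta_def sum_apply
    by (rule sum.cong) (use car in \<open>auto simp: Delta_basis_apply[OF assms(1)]\<close>)
  also have "\<dots> = comult G rhd h ((x1, y1), (x2, y2))"
    using fin by (auto simp: comult_apply)
  finally show "Delta G rhd h ((x1, y1), (x2, y2)) = comult G rhd h ((x1, y1), (x2, y2))" .
qed

lemma ksubspace_Hspace: "ksubspace (Hspace F G :: ('g \<times> 'f \<Rightarrow> 'k::field) set)"
  unfolding ksubspace_eq ksc.subspace_def
proof (intro conjI ballI allI)
  show "0 \<in> Hspace F G" by (simp add: Hspace_def)
next
  fix x y :: "'g \<times> 'f \<Rightarrow> 'k" assume "x \<in> Hspace F G" "y \<in> Hspace F G"
  then show "x + y \<in> Hspace F G"
    unfolding Hspace_def
    by (auto intro: finite_subset[of _ "{p. x p \<noteq> 0} \<union> {p. y p \<noteq> 0}"]) (metis add.right_neutral)+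
next
  fix c and x :: "'g \<times> 'f \<Rightarrow> 'k" assume "x \<in> Hspace F G"
  then show "sc c x \<in> Hspace F G"
    unfolding Hspace_def by (auto intro: finite_subset[of _ "{p. x p \<noteq> 0}"])
qed

lemma (in group) subcoalgebra_iff_comult:
  assumes "finite (carrier G)"
  shows "subcoalgebra F G rhd D \<longleftrightarrow>
    D \<subseteq> Hspace F G \<and> ksubspace D \<and> comult G rhd ` D \<subseteq> tensor_sub D D"
proof -
  have "Delta G rhd ` D = comult G rhd ` D" if "D \<subseteq> Hspace F G"
    using Delta_eq_comult[OF assms] that by (intro image_cong) auto
  then show ?thesis by (auto simp: subcoalgebra_def)
qed

section \<open>The induced comodule\<close>

lemma dual_eps_eq: "finite K \<Longrightarrow> \<one>\<^bsub>G\<^esub> \<in> K \<Longrightarrow> dual_eps G K c = c \<one>\<^bsub>G\<^esub>"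
  by (simp add: dual_eps_def if_distrib[of "(*) _"] cong: if_cong)

lemma (in group) dual_delta_apply:
  assumes K: "subgroup K G" "finite K" and k: "k \<in> K" "k' \<in> K"
  shows "dual_delta G K c (k, k') = c (k \<otimes> k')"
proof -
  interpret K: subgroup K G by (rule K(1))
  have inner: "(\<Sum>x\<in>K. pb (g \<otimes> inv x) k * pb x k') = (if g = k \<otimes> k' then 1 else 0)"
    if g: "g \<in> K" for g
  proof -
    have "(\<Sum>x\<in>K. pb (g \<otimes> inv x) k * pb x k') =
          (\<Sum>x\<in>K. if x = k' then (if k = g \<otimes> inv k' then 1 else 0) else 0)"
      by (rule sum.cong) (auto simp: pb_def)
    also have "\<dots> = (if g = k \<otimes> k' then 1 else 0)"
      using k g K(2) by (auto simp: inv_solve_right)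
    finally show ?thesis .
  qed
  have "dual_delta G K c (k, k') = (\<Sum>g\<in>K. c g * (\<Sum>x\<in>K. pb (g \<otimes> inv x) k * pb x k'))"
    unfolding dual_delta_def sum_apply sc_apply tp_apply ..
  also have "\<dots> = (\<Sum>g\<in>K. if g = k \<otimes> k' then c g else 0)"
    by (rule sum.cong) (simp_all add: inner)
  finally show ?thesis
    using K(2) k by simp
qed

lemma (in group) onedim_comodule_character:
  assumes K: "subgroup K G" "finite K" and a: "onedim_comodule G K a"
  shows "a \<one> = 1" and "k \<in> K \<Longrightarrow> k' \<in> K \<Longrightarrow> a (k \<otimes> k') = a k * a k'"
proof -
  define c where "c = (\<lambda>g. if g \<in> K then a g else 0)"
  have dd: "dual_delta G K c = tp c c" and de: "dual_eps G K c = 1"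
    using a unfolding onedim_comodule_def c_def Let_def by auto
  have "c \<one> = 1"
    using de dual_eps_eq[OF K(2) subgroup.one_closed[OF K(1)], of c] by simp
  then show "a \<one> = 1"
    using subgroup.one_closed[OF K(1)] by (simp add: c_def)
  assume k: "k \<in> K" "k' \<in> K"
  then show "a (k \<otimes> k') = a k * a k'"
    using dual_delta_apply[OF K k, of c] dd subgroup.m_closed[OF K(1) k] by (simp add: c_def)
qed

lemma (in group) inv_mult_cancel: "x \<in> carrier G \<Longrightarrow> y \<in> carrier G \<Longrightarrow> inv x \<otimes> (x \<otimes> y) = y"
  by (simp add: m_assoc[symmetric])

lemma (in group) mult_inv_cancel: "x \<in> carrier G \<Longrightarrow> y \<in> carrier G \<Longrightarrow> x \<otimes> (inv x \<otimes> y) = y"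
  by (simp add: m_assoc[symmetric])

locale induced_setting = comm_group G for G :: "'g monoid" (structure) +
  fixes F :: "'f monoid" and rhd :: "'g \<Rightarrow> 'f \<Rightarrow> 'f"
    and f :: 'f and a :: "'g \<Rightarrow> 'k::field" and T :: "'g set"
  assumes finite_carrier: "finite (carrier G)"
    and rhd_closed: "\<And>g y. g \<in> carrier G \<Longrightarrow> y \<in> carrier F \<Longrightarrow> rhd g y \<in> carrier F"
    and rhd_one: "\<And>y. y \<in> carrier F \<Longrightarrow> rhd \<one> y = y"
    and rhd_mult: "\<And>g g' y. g \<in> carrier G \<Longrightarrow> g' \<in> carrier G \<Longrightarrow> y \<in> carrier F \<Longrightarrow>
      rhd (g \<otimes> g') y = rhd g (rhd g' y)"
    and f_closed: "f \<in> carrier F"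
    and onedim: "onedim_comodule G (stab G rhd f) a"
    and T_sub: "T \<subseteq> carrier G" and one_in_T: "\<one> \<in> T"
    and transversal: "\<forall>x\<in>carrier G. \<exists>!z. z \<in> T \<and> x \<in> stab G rhd f #> z"
begin

abbreviation K :: "'g set" where "K \<equiv> stab G rhd f"

lemma stab_iff: "k \<in> K \<longleftrightarrow> k \<in> carrier G \<and> rhd k f = f"
  by (simp add: stab_def)

lemma rhd_inv: "g \<in> carrier G \<Longrightarrow> y \<in> carrier F \<Longrightarrow> rhd (inv g) (rhd g y) = y"
  by (simp add: rhd_mult[symmetric] rhd_one)

lemma subgroup_stab: "subgroup K G"
proof (rule subgroupI)
  show "K \<subseteq> carrier G"
    by (auto simp: stab_iff)
  have "\<one> \<in> K"
    using rhd_one[OF f_closed] by (simp add: stab_iff)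
  then show "K \<noteq> {}" by blast
  show "inv k \<in> K" if "k \<in> K" for k
    using that rhd_inv[OF _ f_closed, of k] by (auto simp: stab_iff)
  show "k \<otimes> k' \<in> K" if "k \<in> K" "k' \<in> K" for k k'
    using that by (simp add: stab_iff rhd_mult f_closed)
qed

interpretation stab: subgroup K G by (rule subgroup_stab)

lemma finite_stab: "finite K"
  using finite_carrier stab.subset by (rule finite_subset[rotated])

lemma finite_T: "finite T"
  using finite_carrier T_sub by (rule finite_subset[rotated])

lemma a_one [simp]: "a \<one> = 1"
  by (rule onedim_comodule_character(1)[OF subgroup_stab finite_stab onedim])

lemma a_mult: "k \<in> K \<Longrightarrow> k' \<in> K \<Longrightarrow> a (k \<otimes> k') = a k * a k'"
  by (rule onedim_comodule_character(2)[OF subgroup_stab finite_stab onedim])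

lemma stab_mult_iff:
  assumes k: "k \<in> K" and y: "y \<in> carrier G"
  shows "k \<otimes> y \<in> K \<longleftrightarrow> y \<in> K"
proof
  assume "k \<otimes> y \<in> K"
  have "y = inv k \<otimes> (k \<otimes> y)"
    using stab.mem_carrier[OF k] y by (simp add: m_assoc[symmetric])
  also have "\<dots> \<in> K"
    using \<open>k \<otimes> y \<in> K\<close> by (rule stab.m_closed[OF stab.m_inv_closed[OF k]])
  finally show "y \<in> K" .
qed (use k in \<open>rule stab.m_closed\<close>)

lemma transversal_rep:
  assumes x: "x \<in> carrier G"
  shows "\<exists>!z. z \<in> T \<and> x \<otimes> inv z \<in> K"
proof -
  have eq: "(z \<in> T \<and> x \<in> K #> z) \<longleftrightarrow> (z \<in> T \<and> x \<otimes> inv z \<in> K)" for z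
    using stab.rcos_module[OF is_group _ x] T_sub by blast
  have "\<exists>!z. z \<in> T \<and> x \<in> K #> z"
    using transversal x by blast
  then show ?thesis by (simp only: eq)
qed

lemma transversal_rep_left:
  assumes y: "y \<in> carrier G"
  shows "\<exists>!w. w \<in> T \<and> w \<otimes> y \<in> K"
proof -
  have "(w \<in> T \<and> inv y \<otimes> inv w \<in> K) \<longleftrightarrow> (w \<in> T \<and> w \<otimes> y \<in> K)" for w
  proof (cases "w \<in> T")
    case True
    then have w: "w \<in> carrier G" using T_sub by blast
    have "inv (inv y \<otimes> inv w) = w \<otimes> y"
      using w y by (simp add: inv_mult_group)
    moreover have "inv (w \<otimes> y) = inv y \<otimes> inv w"
      using w y by (simp add: inv_mult_group)
    ultimately show ?thesis
      using stab.m_inv_closed by metis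
  qed simp
  then show ?thesis using transversal_rep[of "inv y"] y by simp
qed

lemma transversal_eq: "z \<in> T \<Longrightarrow> w \<in> T \<Longrightarrow> w \<otimes> inv z \<in> K \<Longrightarrow> w = z"
  using transversal_rep[of w] T_sub by (auto simp: subsetD)

definition orb :: "'g \<Rightarrow> 'f" where
  "orb z = rhd (inv z) f"

lemma orb_closed: "z \<in> carrier G \<Longrightarrow> orb z \<in> carrier F"
  by (simp add: orb_def rhd_closed f_closed)

lemma rhd_orb: "x \<in> carrier G \<Longrightarrow> z \<in> carrier G \<Longrightarrow> rhd x (orb z) = rhd (x \<otimes> inv z) f"
  by (simp add: orb_def rhd_mult f_closed)

lemma rhd_eq_f_iff:
  assumes w: "w \<in> carrier G" and y: "y \<in> carrier F"
  shows "rhd w y = f \<longleftrightarrow> y = orb w"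
proof
  assume "rhd w y = f"
  then have "rhd (inv w) (rhd w y) = orb w" by (simp add: orb_def)
  then show "y = orb w" using rhd_inv[OF w y] by simp
next
  assume "y = orb w"
  then show "rhd w y = f" using w by (simp add: rhd_orb rhd_one f_closed)
qed

lemma orb_inj: "z \<in> T \<Longrightarrow> w \<in> T \<Longrightarrow> orb z = orb w \<Longrightarrow> z = w"
proof -
  assume zw: "z \<in> T" "w \<in> T" "orb z = orb w"
  then have G: "z \<in> carrier G" "w \<in> carrier G" using T_sub by auto
  have "rhd (w \<otimes> inv z) f = rhd w (orb z)"
    using G by (simp add: rhd_orb)
  also have "\<dots> = f"
    using G zw(3) by (simp add: rhd_eq_f_iff orb_closed)
  finally have "w \<otimes> inv z \<in> K"
    using G by (simp add: stab_iff)
  then show "z = w" using transversal_eq zw by auto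
qed

definition mcoeff :: "'g \<Rightarrow> 'g \<Rightarrow> 'g \<times> 'f \<Rightarrow> 'k" where
  "mcoeff z z' = (\<Sum>g\<in>K. sc (a g) (pf (inv z' \<otimes> g \<otimes> z) (rhd (inv z) f)))"

definition mpoint :: "'g \<Rightarrow> 'g \<Rightarrow> 'g \<times> 'f" where
  "mpoint z z' = (inv z' \<otimes> z, orb z)"

lemma mcoeff_apply:
  assumes z: "z \<in> carrier G" "z' \<in> carrier G"
  shows "mcoeff z z' (x, y) =
    (if y = orb z \<and> x \<in> carrier G \<and> z' \<otimes> x \<otimes> inv z \<in> K then a (z' \<otimes> x \<otimes> inv z) else 0)"
proof -
  have "mcoeff z z' (x, y) =
      (\<Sum>g\<in>K. if g = z' \<otimes> x \<otimes> inv z then (if x \<in> carrier G \<and> y = orb z then a g else 0) else 0)"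
    unfolding mcoeff_def sum_apply
  proof (rule sum.cong[OF refl])
    fix g assume "g \<in> K"
    then have g: "g \<in> carrier G" by (rule stab.mem_carrier)
    have "x = inv z' \<otimes> g \<otimes> z \<longleftrightarrow> x \<in> carrier G \<and> g = z' \<otimes> x \<otimes> inv z"
      using g z by (auto simp: m_assoc inv_mult_cancel mult_inv_cancel)
    then show "sc (a g) (pf (inv z' \<otimes> g \<otimes> z) (rhd (inv z) f)) (x, y) =
        (if g = z' \<otimes> x \<otimes> inv z then (if x \<in> carrier G \<and> y = orb z then a g else 0) else 0)"
      by (auto simp: pf_apply orb_def)
  qed
  also have "\<dots> = (if y = orb z \<and> x \<in> carrier G \<and> z' \<otimes> x \<otimes> inv z \<in> K then a (z' \<otimes> x \<otimes> inv z) else 0)"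
    using finite_stab by auto
  finally show ?thesis .
qed

lemma mcoeff_Hspace:
  assumes "z \<in> carrier G" "z' \<in> carrier G"
  shows "mcoeff z z' \<in> Hspace F G"
proof -
  have "{p. mcoeff z z' p \<noteq> 0} \<subseteq> carrier G \<times> {orb z}"
    using assms by (auto simp: mcoeff_apply split: if_splits)
  moreover have "finite (carrier G \<times> {orb z})"
    using finite_carrier by simp
  ultimately show ?thesis
    unfolding Hspace_def using orb_closed[OF assms(1)] by (auto intro: finite_subset)
qed

lemma mcoeff_mpoint:
  assumes T: "z \<in> T" "z' \<in> T" "w \<in> T" "w' \<in> T"
  shows "mcoeff w w' (mpoint z z') = (if w = z \<and> w' = z' then 1 else 0)"
proof -
  have G: "z \<in> carrier G" "z' \<in> carrier G" "w \<in> carrier G" "w' \<in> carrier G"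
    using T T_sub by auto
  have eval: "mcoeff w w' (mpoint z z') = (if orb z = orb w \<and> w' \<otimes> (inv z' \<otimes> z) \<otimes> inv w \<in> K
      then a (w' \<otimes> (inv z' \<otimes> z) \<otimes> inv w) else 0)"
    using G by (simp add: mpoint_def mcoeff_apply)
  show ?thesis
  proof (cases "w = z \<and> w' = z'")
    case True
    then have "w' \<otimes> (inv z' \<otimes> z) \<otimes> inv w = \<one>"
      using G by (simp add: mult_inv_cancel)
    then show ?thesis using True eval by simp
  next
    case False
    have nc: "\<not> (orb z = orb w \<and> w' \<otimes> (inv z' \<otimes> z) \<otimes> inv w \<in> K)"
    proof
      assume *: "orb z = orb w \<and> w' \<otimes> (inv z' \<otimes> z) \<otimes> inv w \<in> K"
      then have "z = w" using orb_inj T by blast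
      then have "w' \<otimes> inv z' \<in> K" using * G by (simp add: m_assoc)
      then have "w' = z'" using transversal_eq T by blast
      then show False using False \<open>z = w\<close> by blast
    qed
    show ?thesis unfolding eval by (simp only: if_not_P[OF nc] if_not_P[OF False])
  qed
qed

lemma biorthogonal_mcoeff: "biorthogonal (case_prod mcoeff) (case_prod mpoint) (T \<times> T)"
  using finite_T by (auto simp: biorthogonal_def mcoeff_mpoint)

lemma orb_transport:
  assumes G: "w \<in> carrier G" "x \<in> carrier G" "z \<in> carrier G" and k: "w \<otimes> x \<otimes> inv z \<in> K"
  shows "orb w = rhd x (orb z)"
proof -
  have "rhd w (rhd x (orb z)) = rhd (w \<otimes> x \<otimes> inv z) f"
    using G by (simp add: rhd_orb rhd_mult f_closed m_assoc)
  also have "\<dots> = f"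
    using k by (simp add: stab_iff)
  finally show ?thesis
    using G by (simp add: rhd_eq_f_iff rhd_closed orb_closed)
qed

lemma sum_mcoeff_products:
  assumes z: "z \<in> T" "z' \<in> T" and x2: "x2 \<in> carrier G"
    and w0: "w0 \<in> T" "w0 \<otimes> x2 \<otimes> inv z \<in> K"
  shows "(\<Sum>w\<in>T. tp (mcoeff w z') (mcoeff z w)) ((x1, y1), (x2, y2)) =
    mcoeff w0 z' (x1, y1) * mcoeff z w0 (x2, y2)"
proof -
  have G: "z \<in> carrier G" "z' \<in> carrier G" and TG: "\<And>w. w \<in> T \<Longrightarrow> w \<in> carrier G"
    using z T_sub by auto
  have "\<exists>!w. w \<in> T \<and> w \<otimes> (x2 \<otimes> inv z) \<in> K"
    using x2 G by (intro transversal_rep_left) simp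
  then have uq: "w = w0" if "w \<in> T" "w \<otimes> x2 \<otimes> inv z \<in> K" for w
    using that w0 TG x2 G by (auto simp: m_assoc)
  have "(\<Sum>w\<in>T. tp (mcoeff w z') (mcoeff z w)) ((x1, y1), (x2, y2)) =
      (\<Sum>w\<in>T. if w = w0 then mcoeff w0 z' (x1, y1) * mcoeff z w0 (x2, y2) else 0)"
    unfolding sum_apply
  proof (rule sum.cong[OF refl])
    fix w assume w: "w \<in> T"
    have "w \<noteq> w0 \<Longrightarrow> mcoeff z w (x2, y2) = 0"
      using uq[OF w] TG[OF w] G by (auto simp: mcoeff_apply)
    then show "tp (mcoeff w z') (mcoeff z w) ((x1, y1), (x2, y2)) =
        (if w = w0 then mcoeff w0 z' (x1, y1) * mcoeff z w0 (x2, y2) else 0)"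
      by auto
  qed
  then show ?thesis
    using w0(1) finite_T by simp
qed

lemma comult_mcoeff:
  assumes z: "z \<in> T" "z' \<in> T"
  shows "comult G rhd (mcoeff z z') = (\<Sum>w\<in>T. tp (mcoeff w z') (mcoeff z w))"
proof (rule ext, clarify)
  fix x1 y1 x2 y2
  have G: "z \<in> carrier G" "z' \<in> carrier G" and TG: "\<And>w. w \<in> T \<Longrightarrow> w \<in> carrier G"
    using z T_sub by auto
  show "comult G rhd (mcoeff z z') ((x1, y1), (x2, y2)) =
      (\<Sum>w\<in>T. tp (mcoeff w z') (mcoeff z w)) ((x1, y1), (x2, y2))"
  proof (cases "x1 \<in> carrier G \<and> x2 \<in> carrier G \<and> y2 = orb z")
    case False
    then show ?thesis
      using G TG by (auto simp: comult_apply sum_apply mcoeff_apply intro!: sum.neutral)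
  next
    case True
    then have x: "x1 \<in> carrier G" "x2 \<in> carrier G" and y2: "y2 = orb z" by auto
    have "\<exists>!w. w \<in> T \<and> w \<otimes> (x2 \<otimes> inv z) \<in> K"
      using x G by (intro transversal_rep_left) simp
    then obtain w0 where w0: "w0 \<in> T" "w0 \<otimes> (x2 \<otimes> inv z) \<in> K"
      by blast
    have w0G: "w0 \<in> carrier G" using w0(1) T_sub by blast
    define k where "k = w0 \<otimes> x2 \<otimes> inv z"
    define u where "u = z' \<otimes> x1 \<otimes> inv w0"
    have k: "k \<in> K" using w0(2) x G w0G by (simp add: k_def m_assoc)
    have uG: "u \<in> carrier G" using x G w0G by (simp add: u_def)
    have "z' \<otimes> (x1 \<otimes> x2) \<otimes> inv z = u \<otimes> k"
      using x G w0G by (simp add: u_def k_def m_assoc inv_mult_cancel)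
    then have uk: "z' \<otimes> (x1 \<otimes> x2) \<otimes> inv z = k \<otimes> u"
      using stab.mem_carrier[OF k] uG by (simp add: m_comm)
    have orb_w0: "orb w0 = rhd x2 y2"
      using orb_transport[OF w0G x(2) G(1)] k y2 by (simp add: k_def)
    have "(\<Sum>w\<in>T. tp (mcoeff w z') (mcoeff z w)) ((x1, y1), (x2, y2)) =
        mcoeff w0 z' (x1, y1) * mcoeff z w0 (x2, y2)"
      using k by (intro sum_mcoeff_products[OF z x(2) w0(1)]) (simp add: k_def)
    also have "\<dots> = (if y1 = orb w0 \<and> u \<in> K then a u * a k else 0)"
      using x G w0G k y2 by (simp add: mcoeff_apply u_def k_def[symmetric])
    also have "\<dots> = comult G rhd (mcoeff z z') ((x1, y1), (x2, y2))"
      using x G y2 k uG by (simp add: comult_apply mcoeff_apply uk orb_w0 stab_mult_iff a_mult mult.commute)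
    finally show ?thesis by simp
  qed
qed

abbreviation M :: "('g \<times> 'f \<Rightarrow> 'k) set" where
  "M \<equiv> induced_comodule F G rhd f a"

lemma coaction_coeff_apply:
  "(\<Sum>g\<in>K. sc (a g) (pf g f)) (g, y) = (if g \<in> K \<and> y = f then a g else 0)"
proof -
  have "(\<Sum>g\<in>K. sc (a g) (pf g f)) (g, y) = (\<Sum>g'\<in>K. if g' = g then (if y = f then a g' else 0) else 0)"
    unfolding sum_apply by (rule sum.cong) (auto simp: pf_apply)
  then show ?thesis using finite_stab by simp
qed

lemma left_coact_apply:
  "h \<in> Hspace F G \<Longrightarrow> left_coact G rhd f h ((g, y1), (x, y)) =
      (if g \<in> K \<and> x \<in> carrier G \<and> y1 = rhd x y then h (g \<otimes> x, y) else 0)"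
  using stab.mem_carrier by (auto simp: left_coact_def Delta_eq_comult[OF finite_carrier] comult_apply)

lemma induced_comodule_iff_pointwise:
  "h \<in> Hspace F G \<Longrightarrow> h \<in> M \<longleftrightarrow>
    (\<forall>g y1 x y. (if g \<in> K \<and> y1 = f then a g else 0) * h (x, y) =
      (if g \<in> K \<and> x \<in> carrier G \<and> y1 = rhd x y then h (g \<otimes> x, y) else 0))"
  unfolding induced_comodule_def
  by (simp only: mem_Collect_eq simp_thms fun_eq_iff split_paired_All tp_apply coaction_coeff_apply
      left_coact_apply)

lemma induced_comodule_iff:
  "h \<in> M \<longleftrightarrow> h \<in> Hspace F G \<and>
    (\<forall>k\<in>K. \<forall>x\<in>carrier G. \<forall>y. h (k \<otimes> x, y) = (if rhd x y = f then a k * h (x, y) else 0))"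
proof (cases "h \<in> Hspace F G")
  case False
  then show ?thesis by (simp add: induced_comodule_def)
next
  case H: True
  have "(\<forall>g y1 x y. (if g \<in> K \<and> y1 = f then a g else 0) * h (x, y) =
      (if g \<in> K \<and> x \<in> carrier G \<and> y1 = rhd x y then h (g \<otimes> x, y) else 0)) \<longleftrightarrow>
    (\<forall>k\<in>K. \<forall>x\<in>carrier G. \<forall>y. h (k \<otimes> x, y) = (if rhd x y = f then a k * h (x, y) else 0))"
    (is "?E \<longleftrightarrow> ?C")
  proof
    assume E: ?E
    show ?C
    proof (intro ballI allI)
      fix k x y assume "k \<in> K" "x \<in> carrier G"
      then show "h (k \<otimes> x, y) = (if rhd x y = f then a k * h (x, y) else 0)"
        using E[rule_format, of k "rhd x y" x y] by (auto split: if_splits)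
    qed
  next
    assume C: ?C
    have outside: "x \<notin> carrier G \<Longrightarrow> h (x, y) = 0" for x y
      using H by (auto simp: Hspace_def)
    have off_orbit: "h (x, y) = 0" if "x \<in> carrier G" "rhd x y \<noteq> f" for x y
      using C[rule_format, OF stab.one_closed that(1), of y] that by simp
    show ?E
    proof (intro allI)
      fix g y1 x y
      show "(if g \<in> K \<and> y1 = f then a g else 0) * h (x, y) =
          (if g \<in> K \<and> x \<in> carrier G \<and> y1 = rhd x y then h (g \<otimes> x, y) else 0)"
      proof (cases "g \<in> K \<and> x \<in> carrier G")
        case True
        then show ?thesis
          using C[rule_format, of g x y] off_orbit[of x y] by auto
      qed (use outside in auto)
    qed
  qed
  then show ?thesis
    using H induced_comodule_iff_pointwise by blast
qed

lemma ksubspace_induced_comodule: "ksubspace M"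
proof -
  have H: "ksc.subspace (Hspace F G :: ('g \<times> 'f \<Rightarrow> 'k) set)"
    using ksubspace_Hspace by (simp add: ksubspace_eq)
  show ?thesis
    unfolding ksubspace_eq ksc.subspace_def
  proof (intro conjI ballI allI)
    show "0 \<in> M"
      using ksc.subspace_0[OF H] by (simp add: induced_comodule_iff)
    fix h h' assume "h \<in> M" "h' \<in> M"
    then show "h + h' \<in> M"
      using ksc.subspace_add[OF H] by (simp add: induced_comodule_iff distrib_left)
  next
    fix c and h :: "'g \<times> 'f \<Rightarrow> 'k" assume "h \<in> M"
    then show "sc c h \<in> M"
      using ksc.subspace_scale[OF H] by (simp add: induced_comodule_iff mult.left_commute)
  qed
qed

lemma mcoeff_one_apply:
  "z \<in> carrier G \<Longrightarrow>
    mcoeff z \<one> (x, y) = (if y = orb z \<and> x \<in> carrier G \<and> x \<otimes> inv z \<in> K then a (x \<otimes> inv z) else 0)"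
  by (auto simp: mcoeff_apply)

lemma mcoeff_one_in_induced_comodule:
  assumes "z \<in> T"
  shows "mcoeff z \<one> \<in> M"
proof -
  have z: "z \<in> carrier G" using assms T_sub by auto
  have "mcoeff z \<one> (k \<otimes> x, y) = (if rhd x y = f then a k * mcoeff z \<one> (x, y) else 0)"
    if k: "k \<in> K" and x: "x \<in> carrier G" for k x y
  proof -
    define g where "g = x \<otimes> inv z"
    have gG: "g \<in> carrier G" using x z by (simp add: g_def)
    have kg: "k \<otimes> x \<otimes> inv z = k \<otimes> g"
      using stab.mem_carrier[OF k] x z by (simp add: g_def m_assoc)
    show ?thesis
    proof (cases "y = orb z")
      case True
      then have "rhd x y = f \<longleftrightarrow> g \<in> K"
        using x z gG by (simp add: rhd_orb g_def stab_iff)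
      then show ?thesis
        using True k x z gG stab.mem_carrier[OF k]
        by (simp add: mcoeff_one_apply kg g_def[symmetric] stab_mult_iff a_mult)
    qed (use k x z stab.mem_carrier[OF k] in \<open>simp add: mcoeff_one_apply\<close>)
  qed
  then show ?thesis
    using mcoeff_Hspace[OF z] by (simp add: induced_comodule_iff)
qed

lemma mpoint_one: "z \<in> carrier G \<Longrightarrow> mpoint z \<one> = (z, orb z)"
  by (simp add: mpoint_def)

lemma induced_comodule_expansion:
  assumes h: "h \<in> M"
  shows "h = (\<Sum>z\<in>T. sc (h (mpoint z \<one>)) (mcoeff z \<one>))"
proof (rule ext, clarify)
  fix x y
  have H: "h \<in> Hspace F G"
    and hc: "\<And>k x y. k \<in> K \<Longrightarrow> x \<in> carrier G \<Longrightarrow> h (k \<otimes> x, y) = (if rhd x y = f then a k * h (x, y) else 0)"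
    using h by (auto simp: induced_comodule_iff)
  have TG: "\<And>w. w \<in> T \<Longrightarrow> w \<in> carrier G" using T_sub by auto
  show "h (x, y) = (\<Sum>z\<in>T. sc (h (mpoint z \<one>)) (mcoeff z \<one>)) (x, y)"
  proof (cases "x \<in> carrier G \<and> y \<in> carrier F")
    case False
    then have "h (x, y) = 0" using H by (auto simp: Hspace_def)
    moreover have "mcoeff z \<one> (x, y) = 0" if "z \<in> T" for z
      using False TG[OF that] orb_closed[OF TG[OF that]] by (auto simp: mcoeff_one_apply)
    ultimately show ?thesis by (simp add: sum_apply)
  next
    case True
    then have x: "x \<in> carrier G" and y: "y \<in> carrier F" by auto
    obtain w where w: "w \<in> T" "x \<otimes> inv w \<in> K"
      and uq: "\<And>z. z \<in> T \<Longrightarrow> x \<otimes> inv z \<in> K \<Longrightarrow> z = w"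
      using transversal_rep[OF x] by blast
    define k where "k = x \<otimes> inv w"
    have k: "k \<in> K" using w by (simp add: k_def)
    have x_eq: "x = k \<otimes> w" using x TG[OF w(1)] by (simp add: k_def m_assoc)
    have "(\<Sum>z\<in>T. sc (h (mpoint z \<one>)) (mcoeff z \<one>)) (x, y) =
        (\<Sum>z\<in>T. if z = w then h (w, orb w) * mcoeff w \<one> (x, y) else 0)"
      unfolding sum_apply
    proof (rule sum.cong[OF refl])
      fix z assume z: "z \<in> T"
      have "z \<noteq> w \<Longrightarrow> mcoeff z \<one> (x, y) = 0"
        using uq[OF z] TG[OF z] by (auto simp: mcoeff_one_apply)
      then show "sc (h (mpoint z \<one>)) (mcoeff z \<one>) (x, y) =
          (if z = w then h (w, orb w) * mcoeff w \<one> (x, y) else 0)"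
        using TG[OF z] by (auto simp: mpoint_one)
    qed
    also have "\<dots> = h (w, orb w) * (if y = orb w then a k else 0)"
      using w finite_T x TG[OF w(1)] by (simp add: mcoeff_one_apply k_def)
    also have "\<dots> = h (x, y)"
      using hc[OF k TG[OF w(1)], of y] TG[OF w(1)] y by (auto simp: x_eq rhd_eq_f_iff)
    finally show ?thesis by simp
  qed
qed

lemma biorthogonal_induced_basis: "biorthogonal (\<lambda>z. mcoeff z \<one>) (\<lambda>z. mpoint z \<one>) T"
  using finite_T one_in_T by (auto simp: biorthogonal_def mcoeff_mpoint)

lemma induced_comodule_eq_kspan: "M = kspan ((\<lambda>z. mcoeff z \<one>) ` T)"
proof
  show "M \<subseteq> kspan ((\<lambda>z. mcoeff z \<one>) ` T)"
  proof
    fix h assume h: "h \<in> M"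
    have "(\<Sum>z\<in>T. sc (h (mpoint z \<one>)) (mcoeff z \<one>)) \<in> kspan ((\<lambda>z. mcoeff z \<one>) ` T)"
      unfolding kspan_eq by (intro ksc.span_sum ksc.span_scale ksc.span_base) auto
    then show "h \<in> kspan ((\<lambda>z. mcoeff z \<one>) ` T)"
      using induced_comodule_expansion[OF h] by simp
  qed
  show "kspan ((\<lambda>z. mcoeff z \<one>) ` T) \<subseteq> M"
    using ksubspace_induced_comodule mcoeff_one_in_induced_comodule
    unfolding kspan_eq ksubspace_eq by (intro ksc.span_minimal) auto
qed

interpretation mc: matrix_coalgebra "comult G rhd" mcoeff mpoint T
  unfolding matrix_coalgebra_def using module_hom_comult biorthogonal_mcoeff comult_mcoeff by blast

lemma coalg_subcoalgebra: "subcoalgebra F G rhd mc.coalg"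
proof -
  have "mc.coalg \<subseteq> Hspace F G"
    using ksubspace_Hspace T_sub unfolding kspan_eq ksubspace_eq
    by (intro ksc.span_minimal) (auto intro!: mcoeff_Hspace)
  then show ?thesis
    using mc.comult_coalg by (auto simp: subcoalgebra_iff_comult[OF finite_carrier] ksubspace_eq kspan_eq)
qed

lemma comult_mcoeff_one: "z \<in> T \<Longrightarrow> comult G rhd (mcoeff z \<one>) = (\<Sum>w\<in>T. tp (mcoeff w \<one>) (mcoeff z w))"
  using comult_mcoeff[OF _ one_in_T] .

lemma Delta_induced_comodule: "h \<in> M \<Longrightarrow> Delta G rhd h = comult G rhd h"
  by (rule Delta_eq_comult[OF finite_carrier, of h F]) (simp add: induced_comodule_iff)

theorem is_cf_induced_comodule: "is_cf F G rhd M mc.coalg"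
  unfolding is_cf_def
proof (intro conjI allI impI)
  show "subcoalgebra F G rhd mc.coalg" by (rule coalg_subcoalgebra)
  show "Delta G rhd ` M \<subseteq> tensor_sub M mc.coalg"
    using mc.comodule_comult[OF comult_mcoeff_one] induced_comodule_eq_kspan
    by (auto simp: Delta_induced_comodule)
  fix D assume D: "subcoalgebra F G rhd D \<and> Delta G rhd ` M \<subseteq> tensor_sub M D"
  show "mc.coalg \<subseteq> D"
  proof (rule mc.comodule_coefficients_minimal[OF biorthogonal_induced_basis comult_mcoeff_one])
    show "ksubspace D" using D by (simp add: subcoalgebra_def)
    show "comult G rhd x \<in> tensor_sub (kspan ((\<lambda>z. mcoeff z \<one>) ` T)) D"
      if "x \<in> kspan ((\<lambda>z. mcoeff z \<one>) ` T)" for x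
      using that D induced_comodule_eq_kspan by (auto simp: Delta_induced_comodule[symmetric])
  qed
qed

theorem simple_subcoalgebra_coalg: "simple_subcoalgebra F G rhd mc.coalg"
  unfolding simple_subcoalgebra_def
proof (intro conjI allI impI)
  show "subcoalgebra F G rhd mc.coalg" by (rule coalg_subcoalgebra)
  have "mcoeff \<one> \<one> (mpoint \<one> \<one>) = 1"
    using one_in_T by (simp add: mcoeff_mpoint)
  then show "mc.coalg \<noteq> {0}"
    using mc.unit_in_coalg[OF one_in_T one_in_T] by force
  fix D assume D: "subcoalgebra F G rhd D \<and> D \<subseteq> mc.coalg"
  then show "D = {0} \<or> D = mc.coalg"
    using mc.simple_coalg by (auto simp: subcoalgebra_iff_comult[OF finite_carrier])
qed

theorem character_induced_comodule: "character G rhd M = (\<Sum>z\<in>T. mcoeff z z)"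
  by (rule character_eqI[OF module_hom_comult Delta_induced_comodule biorthogonal_induced_basis
        induced_comodule_eq_kspan comult_mcoeff_one])

lemma mcoeff_diag: "z \<in> T \<Longrightarrow> mcoeff z z = (\<Sum>g\<in>K. sc (a g) (pf g (rhd (inv z) f)))"
  unfolding mcoeff_def
proof (rule sum.cong[OF refl])
  fix g assume "z \<in> T" "g \<in> K"
  then have "inv z \<otimes> g \<otimes> z = g"
    using T_sub stab.mem_carrier by (auto simp: m_comm[of "inv z" g] m_assoc)
  then show "sc (a g) (pf (inv z \<otimes> g \<otimes> z) (rhd (inv z) f)) = sc (a g) (pf g (rhd (inv z) f))"
    by simp
qed

lemma coalg_eq_kspan_mcoeff: "mc.coalg = kspan {mcoeff z z' | z z'. z \<in> T \<and> z' \<in> T}"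
  by (rule arg_cong[where f = kspan]) auto

end

theorem lemma6p1:
  fixes F :: "'f monoid" and G :: "'g monoid"
    and lhd :: "'g \<Rightarrow> 'f \<Rightarrow> 'g" and rhd :: "'g \<Rightarrow> 'f \<Rightarrow> 'f"
    and f :: 'f and a :: "'g \<Rightarrow> 'k::field_char_0" and T :: "'g set"
  assumes "algebraically_closed TYPE('k)"
    and "group F" and "comm_group G" and "finite (carrier G)"
    and "matched_pair F G lhd rhd"
    and "f \<in> carrier F"
    and "onedim_comodule G (stab G rhd f) a"
    and "T \<subseteq> carrier G" and "\<one>\<^bsub>G\<^esub> \<in> T"
    and "\<forall>x\<in>carrier G. \<exists>!z. z \<in> T \<and> x \<in> stab G rhd f #>\<^bsub>G\<^esub> z"
  shows "is_cf F G rhd (induced_comodule F G rhd f a)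
           (kspan {(\<Sum>g\<in>stab G rhd f.
                       sc (a g) (pf (inv\<^bsub>G\<^esub> z' \<otimes>\<^bsub>G\<^esub> g \<otimes>\<^bsub>G\<^esub> z) (rhd (inv\<^bsub>G\<^esub> z) f)))
                  | z z'. z \<in> T \<and> z' \<in> T})
       \<and> simple_subcoalgebra F G rhd
           (kspan {(\<Sum>g\<in>stab G rhd f.
                       sc (a g) (pf (inv\<^bsub>G\<^esub> z' \<otimes>\<^bsub>G\<^esub> g \<otimes>\<^bsub>G\<^esub> z) (rhd (inv\<^bsub>G\<^esub> z) f)))
                  | z z'. z \<in> T \<and> z' \<in> T})
       \<and> character G rhd (induced_comodule F G rhd f a) =
           (\<Sum>z\<in>T. \<Sum>g\<in>stab G rhd f. sc (a g) (pf g (rhd (inv\<^bsub>G\<^esub> z) f)))"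
proof -
  interpret induced_setting G F rhd f a T
    unfolding induced_setting_def induced_setting_axioms_def using assms by (auto simp: matched_pair_def)
  have "character G rhd M = (\<Sum>z\<in>T. \<Sum>g\<in>stab G rhd f. sc (a g) (pf g (rhd (inv\<^bsub>G\<^esub> z) f)))"
    using character_induced_comodule by (simp add: mcoeff_diag)
  then show ?thesis
    using is_cf_induced_comodule simple_subcoalgebra_coalg unfolding coalg_eq_kspan_mcoeff mcoeff_def by simp
qed

end
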